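(* Let $x_1,x_2,x_3>0$, $\gamma,\delta>0$ with $\gamma\ne1\ne\delta$, and let $$\mathbf{Q}=\begin{pmatrix}1&\delta x_1&x_2&x_3\\ 1/(\delta x_1)&1&x_2/x_1&x_3/x_1\\ 1/x_2&x_1/x_2&1&\gamma x_3/x_2\\ 1/x_3&x_1/x_3&x_2/(\gamma x_3)&1\end{pmatrix}$$ with principal right eigenvector $\mathbf{w}^{EM}$. If $\delta,\gamma<1$, then $w_1^{EM}/w_4^{EM}<x_3$.
   Context: The principal right eigenvector is the positive (Perron) eigenvector belonging to the largest eigenvalue. *)

theory Defs
  imports "HOL-Analysis.Analysis"
begin

definition real_eigenvalue :: "real^'n^'n \<Rightarrow> real \<Rightarrow> bool" where
  "real_eigenvalue A \<mu> \<longleftrightarrow> (\<exists>v. v \<noteq> 0 \<and> A *v v = \<mu> *s v)"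

definition principal_right_eigenvector :: "real^'n^'n \<Rightarrow> real^'n \<Rightarrow> bool" where
  "principal_right_eigenvector A w \<longleftrightarrow>
     (\<forall>i. w $ i > 0) \<and>
     (\<exists>r. A *v w = r *s w \<and> (\<forall>\<mu>. real_eigenvalue A \<mu> \<longrightarrow> \<mu> \<le> r))"

definition Qmat :: "real \<Rightarrow> real \<Rightarrow> real \<Rightarrow> real \<Rightarrow> real \<Rightarrow> real^4^4" where
  "Qmat x1 x2 x3 \<gamma> \<delta> = vector [
     vector [1, \<delta> * x1, x2, x3],
     vector [1 / (\<delta> * x1), 1, x2 / x1, x3 / x1],
     vector [1 / x2, x1 / x2, 1, \<gamma> * x3 / x2],
     vector [1 / x3, x1 / x3, x2 / (\<gamma> * x3), 1]]"

end

theory Submission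
  imports Defs
begin

text \<open>Row 1 of Q is dominated entrywise by \<open>x\<^sub>3\<close> times row 4, strictly in
  the second and third entries when \<open>\<delta>, \<gamma> < 1\<close>. A positive eigenvector
  with positive eigenvalue inherits such a domination: \<open>r w\<^sub>1 = (Q w)\<^sub>1 <
  x\<^sub>3 (Q w)\<^sub>4 = x\<^sub>3 r w\<^sub>4\<close>.\<close>

lemma eigenvalue_pos_if_positive_eigenvector:
  fixes A :: "real^'n^'n"
  assumes w_pos: "\<And>k. w $ k > 0" and eigen: "A *v w = r *s w"
    and row_nonneg: "\<And>k. A $ i $ k \<ge> 0" and row_pos: "A $ i $ l > 0"
  shows "r > 0"
proof -
  have "0 < A $ i $ l * w $ l"
    using row_pos w_pos by simp
  also have "\<dots> \<le> (\<Sum>k\<in>UNIV. A $ i $ k * w $ k)"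
    using row_nonneg w_pos
    by (intro member_le_sum) (simp_all add: less_imp_le)
  also have "\<dots> = r * w $ i"
    using arg_cong[OF eigen, of "\<lambda>v. v $ i"] by (simp add: matrix_vector_mult_def)
  finally show ?thesis
    using w_pos[of i] by (simp add: zero_less_mult_iff)
qed

lemma positive_eigenvector_less_if_row_dominated:
  fixes A :: "real^'n^'n"
  assumes w_pos: "\<And>k. w $ k > 0" and eigen: "A *v w = r *s w" and r_pos: "r > 0"
    and dominated: "\<And>k. A $ i $ k \<le> c * A $ j $ k" and strict: "A $ i $ l < c * A $ j $ l"
  shows "w $ i < c * w $ j"
proof -
  have component: "r * w $ m = (\<Sum>k\<in>UNIV. A $ m $ k * w $ k)" for m
    using arg_cong[OF eigen, of "\<lambda>v. v $ m"] by (simp add: matrix_vector_mult_def)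
  have "r * w $ i < (\<Sum>k\<in>UNIV. c * A $ j $ k * w $ k)"
    unfolding component
  proof (rule sum_strict_mono_ex1)
    show "\<forall>k\<in>UNIV. A $ i $ k * w $ k \<le> c * A $ j $ k * w $ k"
      using dominated w_pos by (simp add: less_imp_le)
    show "\<exists>k\<in>UNIV. A $ i $ k * w $ k < c * A $ j $ k * w $ k"
      using strict w_pos[of l] by (intro bexI[of _ l]) simp_all
  qed simp
  also have "\<dots> = c * (r * w $ j)"
    by (simp add: component sum_distrib_left mult.assoc)
  finally show ?thesis
    using r_pos by (simp add: mult.left_commute)
qed

lemma vector_4_nth:
  "(vector [a, b, c, d] :: 'a::zero^4) $ 1 = a"
  "(vector [a, b, c, d] :: 'a::zero^4) $ 2 = b"
  "(vector [a, b, c, d] :: 'a::zero^4) $ 3 = c"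
  "(vector [a, b, c, d] :: 'a::zero^4) $ 4 = d"
  unfolding vector_def by simp_all

lemma Qmat_row_1: "Qmat x1 x2 x3 \<gamma> \<delta> $ 1 = vector [1, \<delta> * x1, x2, x3]"
  and Qmat_row_4: "Qmat x1 x2 x3 \<gamma> \<delta> $ 4 = vector [1 / x3, x1 / x3, x2 / (\<gamma> * x3), 1]"
  by (simp_all add: Qmat_def vector_4_nth)

theorem mainTheorem13:
  fixes x1 x2 x3 \<gamma> \<delta> :: real and w :: "real^4"
  assumes "x1 > 0" "x2 > 0" "x3 > 0" "\<gamma> > 0" "\<delta> > 0" "\<gamma> \<noteq> 1" "\<delta> \<noteq> 1"
    and "principal_right_eigenvector (Qmat x1 x2 x3 \<gamma> \<delta>) w"
    and "\<delta> < 1" "\<gamma> < 1"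
  shows "w $ 1 / w $ 4 < x3"
proof -
  let ?Q = "Qmat x1 x2 x3 \<gamma> \<delta>"
  from assms(8) obtain r where w_pos: "\<And>k. w $ k > 0" and eigen: "?Q *v w = r *s w"
    unfolding principal_right_eigenvector_def by blast
  have "r > 0"
  proof (rule eigenvalue_pos_if_positive_eigenvector[OF w_pos eigen, where i = 1 and l = 1])
    show "?Q $ 1 $ k \<ge> 0" for k
      using assms exhaust_4[of k] by (auto simp: Qmat_row_1 vector_4_nth)
  qed (simp add: Qmat_row_1 vector_4_nth)
  have "?Q $ 1 $ k \<le> x3 * ?Q $ 4 $ k" for k
    using assms exhaust_4[of k] by (auto simp: Qmat_row_1 Qmat_row_4 vector_4_nth le_divide_eq)
  moreover have "?Q $ 1 $ 2 < x3 * ?Q $ 4 $ 2"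
    using assms by (simp add: Qmat_row_1 Qmat_row_4 vector_4_nth)
  ultimately have "w $ 1 < x3 * w $ 4"
    using positive_eigenvector_less_if_row_dominated[OF w_pos eigen \<open>r > 0\<close>] by blast
  then show ?thesis
    using w_pos[of 4] by (simp add: divide_less_eq)
qed

end
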